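(* For $s\in\mu_r$, $v\in\mathcal{A}_1$, $w\in\mathcal{A}_r$: \[ v\diamond_s w=\psi_s\bigl(\varphi(v)\ast\psi_s^{-1}(w)\bigr). \]
   Context: Fix $r\ge1$, $\mu_r$ the $r$th roots of unity, $\mathcal{A}_r=\mathbb{Q}\langle x,y_s\mid s\in\mu_r\rangle$ the free noncommutative polynomial algebra over $\mathbb{Q}$, $\mathcal{A}_1=\mathbb{Q}\langle x,y\rangle$ with $y=y_1$. Write $z=x+y_1$, $z_s=x+y_s$, $\delta(1)=0$, $\delta(s)=1$ ($s\ne1$), $z_s^\delta=x+\delta(s)y_s$, $z_{k,s}=x^{k-1}y_s$. Harmonic product: the $\mathbb{Q}$-bilinear product $\ast$ on $\mathcal{A}_r$ with $1\ast w=w\ast 1=w$, $vy_s\ast wy_t=(v\ast wy_t)y_s+(vy_s\ast w)y_t+(v\ast w)xy_{st}$, and $vx\ast w=v\ast wx=(v\ast w)x$. Let $\varphi$ be the algebra automorphism of $\mathcal{A}_r$ with $\varphi(x)=z$, $\varphi(y_s)=\delta(s)y_s-y_1$. Every word is uniquely $z_{k_1,s_1}\cdots z_{k_l,s_l}x^a$ ($l,a\ge0$); define linear maps $\mathcal{I}(z_{k_1,s_1}\cdots z_{k_l,s_l}x^a)=z_{k_1,s_1}z_{k_2,s_1s_2}\cdots z_{k_l,s_1\cdots s_l}x^a$ and $M_s(z_{k_1,s_1}\cdots z_{k_l,s_l}x^a)=z_{k_1,ss_1}z_{k_2,s_2}\cdots z_{k_l,s_l}x^a$ (with $M_s(x^a)=x^a$),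 and $\psi_s=\varphi\circ\mathcal{I}\circ M_s$ (a linear bijection of $\mathcal{A}_r$). Diamond product: for $s\in\mu_r$, $\diamond_s:\mathcal{A}_1\times\mathcal{A}_r\to\mathcal{A}_r$ is the $\mathbb{Q}$-bilinear map defined recursively on words by $1\diamond_s w=w$, $v\diamond_s1=\psi_s\varphi(v)$, and for $v\in\mathcal{A}_1$, $w\in\mathcal{A}_r$, $1\ne t\in\mu_r$: $vx\diamond_s wx=(v\diamond_s wx)x-(vy\diamond_s w)x$; $vy\diamond_s wx=(v\diamond_s wx)y+(vy\diamond_s w)x$; $vx\diamond_s wy=(v\diamond_s wy)x+(vx\diamond_s w)y$; $vy\diamond_s wy=(v\diamond_s wy)y-(vx\diamond_s w)y$; $vx\diamond_s wy_t=(v\diamond_s wy_t)x+(v\diamond_s wz_t)y_t-(vy\diamond_s w)y_t$; $vy\diamond_s wy_t=(v\diamond_s wy_t)y-(v\diamond_s wz_t)y_t+(vy\diamond_s w)y_t$. *)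

theory Defs
  imports Complex_Main "HOL-Library.Poly_Mapping"
begin

datatype letter = X | Y complex

type_synonym word = "letter list"

type_synonym ncpoly = "word \<Rightarrow>\<^sub>0 rat"

definition mu :: "nat \<Rightarrow> complex set" where
  "mu r = {z. z ^ r = 1}"

definition Alg :: "nat \<Rightarrow> ncpoly set" where
  "Alg r = {p. \<forall>w\<in>Poly_Mapping.keys p. \<forall>t. Y t \<in> set w \<longrightarrow> t \<in> mu r}"

text \<open>A_1 = Q<x,y> with y = y_1.\<close>
definition Alg1 :: "ncpoly set" where
  "Alg1 = {p. \<forall>w\<in>Poly_Mapping.keys p. set w \<subseteq> {X, Y 1}}"

definition W :: "word \<Rightarrow> ncpoly" where
  "W w = Poly_Mapping.single w 1"

definition sc :: "rat \<Rightarrow> ncpoly \<Rightarrow> ncpoly" where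
  "sc c p = Poly_Mapping.map (\<lambda>a. c * a) p"

definition lin :: "(word \<Rightarrow> ncpoly) \<Rightarrow> ncpoly \<Rightarrow> ncpoly" where
  "lin F p = (\<Sum>w\<in>Poly_Mapping.keys p. sc (Poly_Mapping.lookup p w) (F w))"

definition pmul :: "ncpoly \<Rightarrow> ncpoly \<Rightarrow> ncpoly" where
  "pmul p q = lin (\<lambda>u. lin (\<lambda>v. W (u @ v)) q) p"

definition rm :: "ncpoly \<Rightarrow> letter \<Rightarrow> ncpoly" where
  "rm p a = pmul p (W [a])"

definition delta :: "complex \<Rightarrow> rat" where
  "delta s = (if s = 1 then 0 else 1)"

lemma len_pos_aux: "(xs::'a list) \<noteq> [] \<Longrightarrow> length xs - Suc 0 < length xs"
  by (cases xs) auto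

lemma len_pos_aux2: "(xs::'a list) \<noteq> [] \<Longrightarrow> (ys::'b list) \<noteq> [] \<Longrightarrow> length xs - Suc 0 + (length ys - Suc 0) < length xs + length ys"
  by (cases xs; cases ys) auto

function hw :: "word \<Rightarrow> word \<Rightarrow> ncpoly" where
  "hw v w =
    (if v = [] then W w else if w = [] then W v else
     (case last v of
        X \<Rightarrow> rm (hw (butlast v) w) X
      | Y s \<Rightarrow>
          (case last w of
             X \<Rightarrow> rm (hw v (butlast w)) X
           | Y t \<Rightarrow> rm (hw (butlast v) w) (Y s) + rm (hw v (butlast w)) (Y t)
                    + rm (rm (hw (butlast v) (butlast w)) X) (Y (s * t)))))"
  by pat_completeness auto
termination
  by (relation "measure (\<lambda>(v, w). length v + length w)") (auto simp: len_pos_aux len_pos_aux2)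

definition harm :: "ncpoly \<Rightarrow> ncpoly \<Rightarrow> ncpoly" where
  "harm p q = lin (\<lambda>u. lin (\<lambda>v. hw u v) q) p"

fun phi_letter :: "letter \<Rightarrow> ncpoly" where
  "phi_letter X = W [X] + W [Y 1]"
| "phi_letter (Y s) = sc (delta s) (W [Y s]) - W [Y 1]"

fun phi_word :: "word \<Rightarrow> ncpoly" where
  "phi_word [] = W []"
| "phi_word (a # w) = pmul (phi_letter a) (phi_word w)"

definition phi :: "ncpoly \<Rightarrow> ncpoly" where
  "phi = lin phi_word"

text \<open>The map I: z_{k1,s1}...z_{kl,sl} x^a -> z_{k1,s1} z_{k2,s1 s2} ... x^a
  (c is the accumulated product of the previous indices).\<close>
fun Iw :: "complex \<Rightarrow> word \<Rightarrow> word" where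
  "Iw c [] = []"
| "Iw c (X # w) = X # Iw c w"
| "Iw c (Y t # w) = Y (c * t) # Iw (c * t) w"

definition Imap :: "ncpoly \<Rightarrow> ncpoly" where
  "Imap = lin (\<lambda>w. W (Iw 1 w))"

fun Mw :: "complex \<Rightarrow> word \<Rightarrow> word" where
  "Mw s [] = []"
| "Mw s (X # w) = X # Mw s w"
| "Mw s (Y t # w) = Y (s * t) # w"

definition Mmap :: "complex \<Rightarrow> ncpoly \<Rightarrow> ncpoly" where
  "Mmap s = lin (\<lambda>w. W (Mw s w))"

definition psi :: "complex \<Rightarrow> ncpoly \<Rightarrow> ncpoly" where
  "psi s p = phi (Imap (Mmap s p))"

text \<open>Diamond product on words (v is meant to be a word in x, y = y_1;
  other words in the first argument are given the value 0).\<close>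
function dw :: "complex \<Rightarrow> word \<Rightarrow> word \<Rightarrow> ncpoly" where
  "dw s v w =
    (if v = [] then W w else if w = [] then psi s (phi (W v)) else
     (case last v of
        X \<Rightarrow>
          (case last w of
             X \<Rightarrow> rm (dw s (butlast v) w) X - rm (dw s (butlast v @ [Y 1]) (butlast w)) X
           | Y t \<Rightarrow>
               (if t = 1 then
                  rm (dw s (butlast v) w) X + rm (dw s v (butlast w)) (Y 1)
                else
                  rm (dw s (butlast v) w) X
                  + rm (dw s (butlast v) (butlast w @ [X]) + dw s (butlast v) (butlast w @ [Y t])) (Y t)
                  - rm (dw s (butlast v @ [Y 1]) (butlast w)) (Y t)))
      | Y c \<Rightarrow>
          (if c \<noteq> 1 then 0 else
           (case last w of
              X \<Rightarrow> rm (dw s (butlast v) w) (Y 1) + rm (dw s (butlast v @ [Y 1]) (butlast w)) X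
            | Y t \<Rightarrow>
               (if t = 1 then
                  rm (dw s (butlast v) w) (Y 1) - rm (dw s (butlast v @ [X]) (butlast w)) (Y 1)
                else
                  rm (dw s (butlast v) w) (Y 1)
                  - rm (dw s (butlast v) (butlast w @ [X]) + dw s (butlast v) (butlast w @ [Y t])) (Y t)
                  + rm (dw s (butlast v @ [Y 1]) (butlast w)) (Y t))))))"
  by pat_completeness auto
termination
  by (relation "measure (\<lambda>(s, v, w). length v + length w)") (auto simp: len_pos_aux len_pos_aux2)

definition diamond :: "complex \<Rightarrow> ncpoly \<Rightarrow> ncpoly \<Rightarrow> ncpoly" where
  "diamond s p q = lin (\<lambda>u. lin (\<lambda>v. dw s u v) q) p"

end

theory Submission
  imports Defs
begin

text \<open>Both sides are bilinear, and every element of \<open>\<A>\<^sub>r\<close> is \<open>\<psi>\<^sub>s\<close> of an element of \<open>\<A>\<^sub>r\<close>,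
  so it suffices to prove \<open>v \<diamond>\<^sub>s \<psi>\<^sub>s(u) = \<psi>\<^sub>s(\<phi>(v) \<ast> u)\<close> for words \<open>v\<close> in \<open>x, y\<close> and
  words \<open>u\<close>, by induction on the total length. The point is that \<open>\<psi>\<^sub>s\<close> turns appending
  a letter into right multiplication by the image of a letter under \<open>\<phi>\<close>: appending \<open>x\<close>
  gives the factor \<open>\<phi>(x)\<close>, and appending \<open>y\<^sub>t\<close> to a word whose indices multiply to \<open>k\<close>
  gives the factor \<open>\<phi>(y\<^sub>s\<^sub>k\<^sub>t)\<close>. Hence the six recursion rules of \<open>\<diamond>\<^sub>s\<close>, read through
  \<open>\<psi>\<^sub>s\<close>, become the recursion rules of \<open>\<ast>\<close> applied to \<open>\<phi>(v)\<close> and \<open>u\<close>.\<close>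

section \<open>The word algebra\<close>

text \<open>With concatenation as addition, \<open>word \<Rightarrow>\<^sub>0 rat\<close> becomes the monoid algebra of words,
  so the ring structure of \<open>Poly_Mapping\<close> is the concatenation product.\<close>
instantiation list :: (type) monoid_add
begin
definition zero_list_def: "(0::'a list) = []"
definition plus_list_def: "(xs::'a list) + ys = xs @ ys"
instance by standard (auto simp: zero_list_def plus_list_def)
end

lemma W_append: "W u * W v = W (u @ v)"
  by (simp add: W_def mult_single plus_list_def)

lemma W_Nil: "W [] = 1"
  by (simp add: W_def zero_list_def[symmetric])

lemma sc_eq_mult: "sc c p = Poly_Mapping.single [] c * p"
  unfolding sc_def zero_list_def[symmetric] by (rule mult_map_scale_conv_mult)

lemma lookup_sc: "Poly_Mapping.lookup (sc c p) w = c * Poly_Mapping.lookup p w"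
  unfolding sc_def by (simp add: Poly_Mapping.map.rep_eq when_def)

lemma keys_sc: "Poly_Mapping.keys (sc c p) \<subseteq> Poly_Mapping.keys p"
  by (auto simp: in_keys_iff lookup_sc)

lemma sc_0 [simp]: "sc 0 p = 0"
  by (simp add: sc_eq_mult)

lemma sc_1 [simp]: "sc 1 p = p"
  by (simp add: sc_eq_mult zero_list_def[symmetric])

lemma sc_add: "sc c (p + q) = sc c p + sc c q"
  by (simp add: sc_eq_mult distrib_left)

lemma sc_add_scalar: "sc (c + d) p = sc c p + sc d p"
  by (simp add: sc_eq_mult single_add distrib_right)

lemma sc_sc: "sc c (sc d p) = sc (c * d) p"
  by (simp add: sc_eq_mult mult.assoc[symmetric] mult_single zero_list_def[symmetric])

lemma sc_sum: "sc c (sum f A) = (\<Sum>x\<in>A. sc c (f x))"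
  by (simp add: sc_eq_mult sum_distrib_left)

lemma lin_superset:
  assumes "finite S" "Poly_Mapping.keys p \<subseteq> S"
  shows "lin F p = (\<Sum>w\<in>S. sc (Poly_Mapping.lookup p w) (F w))"
  unfolding lin_def
  by (rule sum.mono_neutral_left) (use assms in \<open>auto simp: in_keys_iff\<close>)

lemma lin_add: "lin F (p + q) = lin F p + lin F q"
proof -
  let ?S = "Poly_Mapping.keys p \<union> Poly_Mapping.keys q"
  have S: "finite ?S" "Poly_Mapping.keys (p + q) \<subseteq> ?S"
    by (simp_all add: keys_add)
  show ?thesis
    by (simp add: lin_superset[OF S] lin_superset[OF S(1), of p] lin_superset[OF S(1), of q]
        lookup_add sc_add_scalar sum.distrib)
qed

lemma lin_sc: "lin F (sc c p) = sc c (lin F p)"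
proof -
  have "lin F (sc c p) = (\<Sum>w\<in>Poly_Mapping.keys p. sc (Poly_Mapping.lookup (sc c p) w) (F w))"
    by (rule lin_superset) (auto simp: keys_sc)
  then show ?thesis by (simp add: lin_def sc_sum lookup_sc sc_sc)
qed

lemma lin_zero [simp]: "lin F 0 = 0"
  by (simp add: lin_def)

lemma lin_W [simp]: "lin F (W u) = F u"
  by (simp add: lin_def W_def)

lemma lin_cong: "(\<And>w. w \<in> Poly_Mapping.keys p \<Longrightarrow> F w = G w) \<Longrightarrow> lin F p = lin G p"
  by (simp add: lin_def)

lemma lin_W_id: "lin W p = p"
proof (rule poly_mapping_eqI)
  fix k
  have "Poly_Mapping.lookup (lin W p) k
      = (\<Sum>w\<in>Poly_Mapping.keys p. Poly_Mapping.lookup p w * (if w = k then 1 else 0))"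
    by (simp add: lin_def lookup_sum lookup_sc W_def lookup_single when_def)
  also have "\<dots> = Poly_Mapping.lookup p k"
    by (simp add: if_distrib[of "\<lambda>x. _ * x"] in_keys_iff cong: if_cong)
  finally show "Poly_Mapping.lookup (lin W p) k = Poly_Mapping.lookup p k" .
qed

lemma keys_lin: "Poly_Mapping.keys (lin F p) \<subseteq> (\<Union>w\<in>Poly_Mapping.keys p. Poly_Mapping.keys (F w))"
proof -
  have "Poly_Mapping.keys (lin F p)
      \<subseteq> (\<Union>w\<in>Poly_Mapping.keys p. Poly_Mapping.keys (sc (Poly_Mapping.lookup p w) (F w)))"
    unfolding lin_def by (rule keys_sum)
  then show ?thesis
    using keys_sc by blast
qed

definition linear_op :: "(ncpoly \<Rightarrow> ncpoly) \<Rightarrow> bool" where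
  "linear_op G \<longleftrightarrow> (\<forall>p q. G (p + q) = G p + G q) \<and> (\<forall>c p. G (sc c p) = sc c (G p))"

lemma linear_op_lin: "linear_op (lin F)"
  by (simp add: linear_op_def lin_add lin_sc)

lemma linear_op_comp: "linear_op F \<Longrightarrow> linear_op G \<Longrightarrow> linear_op (\<lambda>x. F (G x))"
  by (simp add: linear_op_def)

lemma linear_op_zero: "linear_op G \<Longrightarrow> G 0 = 0"
  unfolding linear_op_def by (metis add_cancel_right_right)

lemma linear_op_sum: "linear_op G \<Longrightarrow> G (sum f A) = (\<Sum>x\<in>A. G (f x))"
  by (induction A rule: infinite_finite_induct) (auto simp: linear_op_zero, simp add: linear_op_def)

lemma linear_op_lin_comp: "linear_op G \<Longrightarrow> G (lin F p) = lin (\<lambda>w. G (F w)) p"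
  unfolding lin_def by (simp add: linear_op_sum) (simp add: linear_op_def)

lemma linear_op_expand: "linear_op G \<Longrightarrow> G p = lin (\<lambda>w. G (W w)) p"
  using linear_op_lin_comp[of G W p] by (simp add: lin_W_id)

lemma linear_op_mult_right: "linear_op (\<lambda>p. p * q)"
  by (simp add: linear_op_def sc_eq_mult distrib_right mult.assoc)

lemma linear_op_sc: "linear_op (sc c)"
  by (simp add: linear_op_def sc_add sc_sc mult.commute)

lemma scalar_commute:
  fixes p :: ncpoly
  shows "p * Poly_Mapping.single [] c = Poly_Mapping.single [] c * p"
proof -
  have "p * Poly_Mapping.single [] c = lin (\<lambda>w. W w * Poly_Mapping.single [] c) p"
    using linear_op_expand[OF linear_op_mult_right] .
  also have "\<dots> = lin (\<lambda>w. sc c (W w)) p"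
    by (simp add: W_def sc_eq_mult mult_single plus_list_def)
  also have "\<dots> = sc c p"
    using linear_op_expand[OF linear_op_sc, of c p] by simp
  finally show ?thesis by (simp add: sc_eq_mult)
qed

lemma linear_op_mult_left: "linear_op (\<lambda>q. p * q)"
  by (simp add: linear_op_def sc_eq_mult distrib_left mult.assoc[symmetric] scalar_commute)

lemma lin_diff: "lin F (p - q) = lin F p - lin F q"
  by (metis add_diff_cancel lin_add diff_add_cancel)

lemma lin_uminus: "lin F (- p) = - lin F p"
  by (metis diff_0 lin_diff lin_zero)

lemma lin_add_fun: "lin (\<lambda>w. F w + G w) p = lin F p + lin G p"
  by (simp add: lin_def sc_add sum.distrib)

lemma lin_diff_fun: "lin (\<lambda>w. F w - G w) p = lin F p - lin G p"
  by (simp add: lin_def sc_eq_mult right_diff_distrib sum_subtractf)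

lemma lin_mult_right: "lin (\<lambda>w. F w * q) p = lin F p * q"
  using linear_op_lin_comp[of "\<lambda>x. x * q" F p] linear_op_mult_right by simp

lemma lin_lin: "lin G (lin F p) = lin (\<lambda>w. lin G (F w)) p"
  by (rule linear_op_lin_comp[OF linear_op_lin])

lemma pmul_eq_mult: "pmul p q = p * q"
proof -
  have "pmul p q = lin (\<lambda>u. W u * q) p"
    unfolding pmul_def
    by (rule lin_cong) (simp add: linear_op_expand[OF linear_op_mult_left, of "W _" q] W_append)
  also have "\<dots> = p * q"
    using linear_op_expand[OF linear_op_mult_right, of p q] by simp
  finally show ?thesis .
qed

lemma rm_eq_mult: "rm p a = p * W [a]"
  by (simp add: rm_def pmul_eq_mult)

lemma mult_W_letter: "p * W [a] = lin (\<lambda>w. W (w @ [a])) p"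
  using linear_op_expand[OF linear_op_mult_right, of p "W [a]"] by (simp add: W_append)

lemma lin_mult_W_letter: "lin F (q * W [b]) = lin (\<lambda>w. F (w @ [b])) q"
  by (simp only: mult_W_letter lin_lin lin_W)

section \<open>Index products and \<open>\<psi>\<^sub>s\<close> on right multiples\<close>

fun index_prod :: "word \<Rightarrow> complex" where
  "index_prod [] = 1"
| "index_prod (X # w) = index_prod w"
| "index_prod (Y t # w) = t * index_prod w"

lemma index_prod_append: "index_prod (u @ v) = index_prod u * index_prod v"
  by (induction u rule: index_prod.induct) auto

definition homogeneous :: "complex \<Rightarrow> ncpoly \<Rightarrow> bool" where
  "homogeneous k p \<longleftrightarrow> (\<forall>w\<in>Poly_Mapping.keys p. index_prod w = k)"

lemma homogeneous_W: "homogeneous (index_prod u) (W u)"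
  by (simp add: homogeneous_def W_def)

lemma homogeneous_add: "homogeneous k p \<Longrightarrow> homogeneous k q \<Longrightarrow> homogeneous k (p + q)"
  using keys_add[of p q] by (auto simp: homogeneous_def)

lemma homogeneous_uminus: "homogeneous k p \<Longrightarrow> homogeneous k (- p)"
  by (auto simp: homogeneous_def)

lemma homogeneous_mult:
  "homogeneous a p \<Longrightarrow> homogeneous b q \<Longrightarrow> homogeneous (a * b) (p * q)"
  using keys_mult[of p q] by (auto simp: homogeneous_def plus_list_def index_prod_append)

lemma homogeneous_mult_W:
  "homogeneous k p \<Longrightarrow> homogeneous (k * index_prod [a]) (p * W [a])"
  by (rule homogeneous_mult) (auto simp: homogeneous_W)

lemma Iw_snoc_X: "Iw c (u @ [X]) = Iw c u @ [X]"
  by (induction c u rule: Iw.induct) auto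

lemma Iw_snoc_Y: "Iw c (u @ [Y t]) = Iw c u @ [Y (c * index_prod u * t)]"
  by (induction c u rule: Iw.induct) (auto simp: mult.assoc)

lemma Iw_Mw_snoc_X: "Iw c (Mw s (u @ [X])) = Iw c (Mw s u) @ [X]"
  by (induction s u rule: Mw.induct) (auto simp: Iw_snoc_X)

lemma Iw_Mw_snoc_Y: "Iw c (Mw s (u @ [Y t])) = Iw c (Mw s u) @ [Y (c * s * index_prod u * t)]"
proof (induction u arbitrary: c)
  case (Cons a u)
  then show ?case by (cases a) (auto simp: Iw_snoc_Y mult_ac)
qed simp

lemma phi_word_snoc: "phi_word (u @ [a]) = phi_word u * phi_letter a"
  by (induction u) (auto simp: pmul_eq_mult W_Nil mult.assoc)

lemma psi_W: "psi s (W u) = phi_word (Iw 1 (Mw s u))"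
  by (simp add: psi_def Mmap_def Imap_def phi_def)

lemma psi_eq_lin: "psi s p = lin (\<lambda>u. phi_word (Iw 1 (Mw s u))) p"
  by (simp add: psi_def Mmap_def Imap_def phi_def lin_lin)

lemma linear_op_psi: "linear_op (psi s)"
  unfolding psi_eq_lin[abs_def] by (rule linear_op_lin)

lemma psi_add: "psi s (p + q) = psi s p + psi s q"
  by (simp only: psi_eq_lin lin_add)

lemma psi_diff: "psi s (p - q) = psi s p - psi s q"
  by (simp only: psi_eq_lin lin_diff)

lemma psi_uminus: "psi s (- p) = - psi s p"
  by (simp only: psi_eq_lin lin_uminus)

lemma psi_mult_W: "psi s p * W [a] = lin (\<lambda>u. psi s (W u) * W [a]) p"
  by (simp add: lin_mult_right linear_op_expand[OF linear_op_psi, symmetric])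

lemma psi_snoc_X: "psi s (p * W [X]) = psi s p * phi_letter X"
proof -
  have "psi s (p * W [X]) = lin (\<lambda>w. psi s (W (w @ [X]))) p"
    by (simp add: mult_W_letter linear_op_lin_comp[OF linear_op_psi])
  also have "\<dots> = lin (\<lambda>w. psi s (W w) * phi_letter X) p"
    by (simp add: psi_W Iw_Mw_snoc_X phi_word_snoc)
  finally show ?thesis
    by (simp add: lin_mult_right linear_op_expand[OF linear_op_psi, symmetric])
qed

lemma psi_snoc_Y:
  assumes "homogeneous k p"
  shows "psi s (p * W [Y t]) = psi s p * phi_letter (Y (s * k * t))"
proof -
  have "psi s (p * W [Y t]) = lin (\<lambda>w. psi s (W (w @ [Y t]))) p"
    by (simp add: mult_W_letter linear_op_lin_comp[OF linear_op_psi])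
  also have "\<dots> = lin (\<lambda>w. psi s (W w) * phi_letter (Y (s * k * t))) p"
    by (rule lin_cong) (use assms in \<open>simp add: homogeneous_def psi_W Iw_Mw_snoc_Y phi_word_snoc\<close>)
  finally show ?thesis
    by (simp add: lin_mult_right linear_op_expand[OF linear_op_psi, symmetric])
qed

lemma phi_letter_Y1: "phi_letter (Y 1) = - W [Y 1]"
  by (simp add: delta_def)

lemma phi_letter_Y: "t \<noteq> 1 \<Longrightarrow> phi_letter (Y t) = W [Y t] - W [Y 1]"
  by (simp add: delta_def)

declare phi_letter.simps [simp del]

lemma homogeneous_phi_word: "set v \<subseteq> {X, Y 1} \<Longrightarrow> homogeneous 1 (phi_word v)"
proof (induction v)
  case Nil
  then show ?case using homogeneous_W[of "[]"] by simp
next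
  case (Cons a v)
  have "homogeneous 1 (W [X])" "homogeneous 1 (W [Y 1])"
    using homogeneous_W[of "[X]"] homogeneous_W[of "[Y 1]"] by simp_all
  moreover have "a = X \<or> a = Y 1"
    using Cons.prems by auto
  ultimately have "homogeneous 1 (phi_letter a)"
    by (auto simp: phi_letter.simps(1) phi_letter_Y1 intro: homogeneous_add homogeneous_uminus)
  then show ?case
    using homogeneous_mult[OF _ Cons.IH] Cons.prems by (simp add: pmul_eq_mult)
qed

declare hw.simps [simp del] dw.simps [simp del]

lemma hw_Nil_left [simp]: "hw [] v = W v"
  by (subst hw.simps) simp

lemma hw_Nil_right [simp]: "hw u [] = W u"
  by (subst hw.simps) simp

lemma hw_snoc_X_left: "hw (u @ [X]) v = hw u v * W [X]"
  by (cases "v = []") (simp_all add: W_append hw.simps[of "u @ [X]" v] rm_eq_mult)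

lemma hw_snoc_X_right: "hw u (v @ [X]) = hw u v * W [X]"
proof (induction u rule: rev_induct)
  case (snoc a u)
  then show ?case
    by (cases a) (simp_all add: hw_snoc_X_left hw.simps[of "u @ [Y _]" "v @ [X]"] rm_eq_mult)
qed (simp add: W_append)

lemma hw_snoc_Y_Y:
  "hw (u @ [Y a]) (v @ [Y b]) = hw u (v @ [Y b]) * W [Y a] + hw (u @ [Y a]) v * W [Y b]
     + hw u v * W [X] * W [Y (a * b)]"
  by (simp add: hw.simps[of "u @ [Y a]" "v @ [Y b]"] rm_eq_mult)

lemma homogeneous_hw: "homogeneous (index_prod u * index_prod v) (hw u v)"
proof (induction u v rule: hw.induct)
  case (1 u v)
  show ?case
  proof (cases "u = [] \<or> v = []")
    case True
    then show ?thesis by (auto simp: homogeneous_W)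
  next
    case False
    then obtain u' a v' b where u: "u = u' @ [a]" and v: "v = v' @ [b]"
      by (metis rev_exhaust)
    show ?thesis
    proof (cases a)
      case X
      with 1(1) u False show ?thesis
        using homogeneous_mult_W[of "index_prod u' * index_prod v" "hw u' v" X]
        by (simp add: hw_snoc_X_left index_prod_append mult_ac)
    next
      case (Y s)
      show ?thesis
      proof (cases b)
        case X
        with 1(2) u v \<open>a = Y s\<close> False show ?thesis
          using homogeneous_mult_W[of "index_prod u * index_prod v'" "hw u v'" X]
          by (simp add: hw_snoc_X_right index_prod_append mult_ac)
      next
        case (Y t)
        have "homogeneous (index_prod u' * index_prod v * index_prod [Y s]) (hw u' v * W [Y s])"
          by (rule homogeneous_mult_W) (use 1(3) u v \<open>a = Y s\<close> Y False in simp)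
        moreover have "homogeneous (index_prod u * index_prod v' * index_prod [Y t]) (hw u v' * W [Y t])"
          by (rule homogeneous_mult_W) (use 1(4) u v \<open>a = Y s\<close> Y False in simp)
        moreover have "homogeneous (index_prod u' * index_prod v' * index_prod [X] * index_prod [Y (s * t)])
            (hw u' v' * W [X] * W [Y (s * t)])"
          by (intro homogeneous_mult_W) (use 1(5) u v \<open>a = Y s\<close> Y False in simp)
        ultimately show ?thesis using u v \<open>a = Y s\<close> Y
          by (simp add: hw_snoc_Y_Y index_prod_append mult_ac homogeneous_add)
      qed
    qed
  qed
qed

lemma homogeneous_lin:
  "(\<And>w. w \<in> Poly_Mapping.keys p \<Longrightarrow> homogeneous k (F w)) \<Longrightarrow> homogeneous k (lin F p)"
  using keys_lin[of F p] unfolding homogeneous_def by blast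

lemma homogeneous_harm:
  "homogeneous a p \<Longrightarrow> homogeneous b q \<Longrightarrow> homogeneous (a * b) (harm p q)"
  unfolding harm_def homogeneous_def[of a] homogeneous_def[of b]
  by (auto intro!: homogeneous_lin) (metis homogeneous_hw)

lemma harm_Nil_right: "harm p (W []) = p"
  by (simp add: harm_def lin_W_id)

lemma harm_Nil_left: "harm (W []) q = q"
proof -
  have "hw [] = W" by auto
  then show ?thesis by (simp add: harm_def lin_W_id)
qed

lemma harm_add_left: "harm (p + p') q = harm p q + harm p' q"
  by (simp add: harm_def lin_add)

lemma harm_uminus_left: "harm (- p) q = - harm p q"
  by (simp add: harm_def lin_uminus)

lemma linear_op_harm_left: "linear_op (\<lambda>p. harm p q)"
proof -
  have "(\<lambda>p. harm p q) = lin (\<lambda>u. lin (hw u) q)"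
    by (rule ext) (simp add: harm_def)
  then show ?thesis by (simp add: linear_op_lin)
qed

lemma linear_op_harm_right: "linear_op (harm p)"
  unfolding linear_op_def harm_def
  using linear_op_lin_comp[OF linear_op_sc, of _ "\<lambda>u. lin (hw u) _" p]
  by (simp add: lin_add lin_add_fun lin_sc)

lemma harm_snoc_X_left: "harm (p * W [X]) q = harm p q * W [X]"
proof -
  have "hw (u @ [X]) = (\<lambda>v. hw u v * W [X])" for u
    by (rule ext) (rule hw_snoc_X_left)
  then show ?thesis
    by (simp add: harm_def mult_W_letter lin_lin lin_mult_right)
qed

lemma harm_snoc_X_right: "harm p (q * W [X]) = harm p q * W [X]"
  by (simp add: harm_def lin_mult_W_letter hw_snoc_X_right lin_mult_right)

lemma harm_snoc_Y_Y:
  "harm (p * W [Y a]) (q * W [Y b]) = harm p (q * W [Y b]) * W [Y a]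
     + harm (p * W [Y a]) q * W [Y b] + harm p q * W [X] * W [Y (a * b)]"
  by (simp add: harm_def lin_mult_W_letter hw_snoc_Y_Y lin_add_fun lin_mult_right)

lemma dw_Nil_left: "dw s [] w = W w"
  by (simp add: dw.simps[of s "[]" w])

lemma dw_Nil_right: "dw s v [] = psi s (phi (W v))"
  by (cases "v = []") (simp_all add: dw_Nil_left dw.simps[of s v "[]"] psi_W phi_def)

definition diamond_word :: "complex \<Rightarrow> word \<Rightarrow> ncpoly \<Rightarrow> ncpoly" where
  "diamond_word s v q = lin (dw s v) q"

lemma diamond_word_Nil: "diamond_word s [] q = q"
proof -
  have "dw s [] = W" by (rule ext) (rule dw_Nil_left)
  then show ?thesis by (simp add: diamond_word_def lin_W_id)
qed

lemma diamond_word_add: "diamond_word s v (p + q) = diamond_word s v p + diamond_word s v q"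
  by (simp add: diamond_word_def lin_add)

lemma diamond_word_diff: "diamond_word s v (p - q) = diamond_word s v p - diamond_word s v q"
  by (simp add: diamond_word_def lin_diff)

lemma diamond_word_uminus: "diamond_word s v (- p) = - diamond_word s v p"
  by (simp add: diamond_word_def lin_uminus)

lemma diamond_word_X_X:
  "diamond_word s (v @ [X]) (q * W [X])
     = diamond_word s v (q * W [X]) * W [X] - diamond_word s (v @ [Y 1]) q * W [X]"
  by (simp add: diamond_word_def lin_mult_W_letter dw.simps[of s "v @ [X]" "_ @ [X]"]
      rm_eq_mult lin_diff_fun lin_mult_right)

lemma diamond_word_X_Y1:
  "diamond_word s (v @ [X]) (q * W [Y 1])
     = diamond_word s v (q * W [Y 1]) * W [X] + diamond_word s (v @ [X]) q * W [Y 1]"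
  by (simp add: diamond_word_def lin_mult_W_letter dw.simps[of s "v @ [X]" "_ @ [Y 1]"]
      rm_eq_mult lin_add_fun lin_mult_right)

lemma diamond_word_X_Y:
  "t \<noteq> 1 \<Longrightarrow> diamond_word s (v @ [X]) (q * W [Y t])
     = diamond_word s v (q * W [Y t]) * W [X]
       + (diamond_word s v (q * W [X]) + diamond_word s v (q * W [Y t])) * W [Y t]
       - diamond_word s (v @ [Y 1]) q * W [Y t]"
  by (simp add: diamond_word_def lin_mult_W_letter dw.simps[of s "v @ [X]" "_ @ [Y t]"]
      rm_eq_mult lin_add_fun lin_diff_fun lin_mult_right)

lemma diamond_word_Y1_X:
  "diamond_word s (v @ [Y 1]) (q * W [X])
     = diamond_word s v (q * W [X]) * W [Y 1] + diamond_word s (v @ [Y 1]) q * W [X]"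
  by (simp add: diamond_word_def lin_mult_W_letter dw.simps[of s "v @ [Y 1]" "_ @ [X]"]
      rm_eq_mult lin_add_fun lin_mult_right)

lemma diamond_word_Y1_Y1:
  "diamond_word s (v @ [Y 1]) (q * W [Y 1])
     = diamond_word s v (q * W [Y 1]) * W [Y 1] - diamond_word s (v @ [X]) q * W [Y 1]"
  by (simp add: diamond_word_def lin_mult_W_letter dw.simps[of s "v @ [Y 1]" "_ @ [Y 1]"]
      rm_eq_mult lin_diff_fun lin_mult_right)

lemma diamond_word_Y1_Y:
  "t \<noteq> 1 \<Longrightarrow> diamond_word s (v @ [Y 1]) (q * W [Y t])
     = diamond_word s v (q * W [Y t]) * W [Y 1]
       - (diamond_word s v (q * W [X]) + diamond_word s v (q * W [Y t])) * W [Y t]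
       + diamond_word s (v @ [Y 1]) q * W [Y t]"
  by (simp add: diamond_word_def lin_mult_W_letter dw.simps[of s "v @ [Y 1]" "_ @ [Y t]"]
      rm_eq_mult lin_add_fun lin_diff_fun lin_mult_right)

text \<open>After expanding both sides by the recursion rules, everything is a
  combination of \<open>h\<close>, \<open>e\<close> and \<open>g c\<close> multiplied on the right by images of letters.\<close>
locale diamond_step =
  fixes s :: complex and v' u' :: word
  assumes s_nonzero: "s \<noteq> 0"
    and v'_letters: "set v' \<subseteq> {X, Y 1}"
    and u'_index_prod: "index_prod u' \<noteq> 0"
    and IH_v': "\<And>b. index_prod [b] \<noteq> 0 \<Longrightarrow>
      diamond_word s v' (psi s (W (u' @ [b]))) = psi s (harm (phi_word v') (W (u' @ [b])))"
    and IH_u': "\<And>a. a \<in> {X, Y 1} \<Longrightarrow>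
      diamond_word s (v' @ [a]) (psi s (W u')) = psi s (harm (phi_word (v' @ [a])) (W u'))"
begin

definition k where "k = s * index_prod u'"
definition q where "q = psi s (W u')"
definition h where "h = psi s (harm (phi_word v') (W u'))"
definition e where "e = psi s (harm (phi_word v' * W [Y 1]) (W u'))"
definition g where "g c = psi s (harm (phi_word v') (W (u' @ [Y c])))"

lemma k_nonzero: "k \<noteq> 0"
  using s_nonzero u'_index_prod by (simp add: k_def)

lemma psi_u'_X: "psi s (W (u' @ [X])) = q * phi_letter X"
  using psi_snoc_X[of s "W u'"] by (simp add: W_append q_def)

lemma psi_u'_Y: "psi s (W (u' @ [Y c])) = q * phi_letter (Y (k * c))"
  using psi_snoc_Y[OF homogeneous_W, of s u' c] by (simp add: W_append q_def k_def mult.assoc)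

lemma diamond_v'_Y1: "diamond_word s v' (q * W [Y 1]) = - g (1 / k)"
proof -
  have "diamond_word s v' (q * phi_letter (Y 1)) = g (1 / k)"
    using IH_v'[of "Y (1 / k)"] psi_u'_Y[of "1 / k"] k_nonzero by (simp add: g_def)
  then show ?thesis
    by (simp add: phi_letter_Y1 diamond_word_uminus minus_equation_iff)
qed

lemma diamond_v'_X: "diamond_word s v' (q * W [X]) = h * phi_letter X + g (1 / k)"
proof -
  have "diamond_word s v' (q * phi_letter X) = h * phi_letter X"
    using IH_v'[of X]
    by (simp add: psi_u'_X h_def q_def W_append[symmetric] harm_snoc_X_right psi_snoc_X)
  then show ?thesis
    using diamond_v'_Y1 by (simp add: phi_letter.simps(1) diamond_word_add algebra_simps)
qed

lemma diamond_v'_Y: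
  assumes "t \<noteq> 1" "t \<noteq> 0"
  shows "diamond_word s v' (q * W [Y t]) = g (t / k) - g (1 / k)"
proof -
  have "diamond_word s v' (q * phi_letter (Y t)) = g (t / k)"
    using IH_v'[of "Y (t / k)"] psi_u'_Y[of "t / k"] k_nonzero assms by (simp add: g_def)
  then show ?thesis
    using diamond_v'_Y1 assms by (simp add: phi_letter_Y right_diff_distrib diamond_word_diff eq_diff_eq)
qed

lemma psi_harm_v'X_u': "psi s (harm (phi_word (v' @ [X])) (W u')) = h * phi_letter X + e"
  by (simp only: phi_word_snoc phi_letter.simps(1) distrib_left harm_add_left psi_add
      harm_snoc_X_left psi_snoc_X h_def e_def)

lemma psi_harm_v'Y1_u': "psi s (harm (phi_word (v' @ [Y 1])) (W u')) = - e"
  by (simp add: e_def phi_word_snoc phi_letter_Y1 harm_uminus_left psi_uminus)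

lemma diamond_v'X_q: "diamond_word s (v' @ [X]) q = h * phi_letter X + e"
  using IH_u'[of X] by (simp add: q_def psi_harm_v'X_u')

lemma diamond_v'Y1_q: "diamond_word s (v' @ [Y 1]) q = - e"
  using IH_u'[of "Y 1"] by (simp add: q_def psi_harm_v'Y1_u')

lemma psi_harm_X_u'Y: "psi s (harm (phi_word v' * W [X]) (W (u' @ [Y t]))) = g t * phi_letter X"
  by (simp only: harm_snoc_X_left psi_snoc_X g_def)

lemma psi_harm_Y1_u'Y:
  "psi s (harm (phi_word v' * W [Y 1]) (W (u' @ [Y t])))
     = (g t + e + h * phi_letter X) * phi_letter (Y (k * t))"
proof -
  have P: "homogeneous 1 (phi_word v')"
    by (rule homogeneous_phi_word[OF v'_letters])
  have K: "homogeneous (index_prod u') (W u')"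
    by (rule homogeneous_W)
  have "psi s (harm (phi_word v') (W u' * W [Y t]) * W [Y 1]) = g t * phi_letter (Y (k * t))"
    using psi_snoc_Y[OF homogeneous_harm[OF P homogeneous_mult_W[OF K, of "Y t"]], of s 1]
    by (simp add: g_def k_def W_append mult_ac)
  moreover have "psi s (harm (phi_word v' * W [Y 1]) (W u') * W [Y t]) = e * phi_letter (Y (k * t))"
    using psi_snoc_Y[OF homogeneous_harm[OF homogeneous_mult_W[OF P, of "Y 1"] K], of s t]
    by (simp add: e_def k_def mult_ac)
  moreover have "psi s (harm (phi_word v') (W u') * W [X] * W [Y t])
      = h * phi_letter X * phi_letter (Y (k * t))"
    using psi_snoc_Y[OF homogeneous_mult_W[OF homogeneous_harm[OF P K], of X], of s t]
    by (simp add: psi_snoc_X h_def k_def mult_ac)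
  ultimately show ?thesis
    by (simp add: W_append[symmetric] harm_snoc_Y_Y psi_add distrib_right)
qed

lemma step_X:
  assumes "a \<in> {X, Y 1}"
  shows "diamond_word s (v' @ [a]) (psi s (W (u' @ [X])))
    = psi s (harm (phi_word (v' @ [a])) (W (u' @ [X])))"
proof -
  have "diamond_word s (v' @ [a]) (psi s (W (u' @ [X])))
      = diamond_word s (v' @ [a]) (q * W [X]) + diamond_word s (v' @ [a]) (q * W [Y 1])"
    by (simp add: psi_u'_X phi_letter.simps(1) distrib_left diamond_word_add)
  moreover have "psi s (harm (phi_word (v' @ [a])) (W (u' @ [X])))
      = psi s (harm (phi_word (v' @ [a])) (W u')) * phi_letter X"
    by (simp add: W_append[symmetric] harm_snoc_X_right psi_snoc_X)
  ultimately show ?thesis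
    using assms
    by (auto simp: diamond_word_X_X diamond_word_X_Y1 diamond_word_Y1_X diamond_word_Y1_Y1
        diamond_v'_X diamond_v'_Y1 diamond_v'X_q diamond_v'Y1_q psi_harm_v'X_u' psi_harm_v'Y1_u'
        phi_letter.simps(1) algebra_simps)
qed

lemma step_Y:
  assumes a: "a \<in> {X, Y 1}" and t: "t \<noteq> 0"
  shows "diamond_word s (v' @ [a]) (psi s (W (u' @ [Y t])))
    = psi s (harm (phi_word (v' @ [a])) (W (u' @ [Y t])))"
proof -
  define l where "l = k * t"
  have lhs: "diamond_word s (v' @ [a]) (psi s (W (u' @ [Y t])))
      = diamond_word s (v' @ [a]) (q * phi_letter (Y l))"
    by (simp add: psi_u'_Y l_def)
  have rhs: "psi s (harm (phi_word (v' @ [a])) (W (u' @ [Y t])))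
      = (if a = X then g t * phi_letter X + (g t + e + h * phi_letter X) * phi_letter (Y l)
         else - ((g t + e + h * phi_letter X) * phi_letter (Y l)))"
    using a psi_harm_X_u'Y[of t] psi_harm_Y1_u'Y[of t]
    by (auto simp: l_def phi_word_snoc phi_letter.simps(1) phi_letter_Y1 distrib_left
        harm_add_left harm_uminus_left psi_add psi_uminus)
  show ?thesis
  proof (cases "l = 1")
    case True
    then have "t = 1 / k"
      using k_nonzero by (simp add: l_def field_simps)
    then show ?thesis
      unfolding lhs rhs using a True
      by (auto simp: phi_letter.simps(1) phi_letter_Y1 diamond_word_uminus
          diamond_word_X_Y1 diamond_word_Y1_Y1 diamond_v'_Y1 diamond_v'X_q algebra_simps)
  next
    case False
    have "l / k = t" "l \<noteq> 0"
      using k_nonzero t by (simp_all add: l_def)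
    then have diamond_v'_Y_l: "diamond_word s v' (q * W [Y l]) = g t - g (1 / k)"
      using diamond_v'_Y[OF False] by simp
    show ?thesis
      unfolding lhs rhs using a False
      by (auto simp: diamond_v'_Y_l phi_letter_Y diamond_word_diff
          diamond_word_X_Y diamond_word_X_Y1 diamond_word_Y1_Y diamond_word_Y1_Y1
          diamond_v'_X diamond_v'_Y1 diamond_v'X_q diamond_v'Y1_q phi_letter.simps(1) algebra_simps)
  qed
qed

end

lemma diamond_word_psi_W:
  assumes "s \<noteq> 0" and "set v \<subseteq> {X, Y 1}" and "index_prod u \<noteq> 0"
  shows "diamond_word s v (psi s (W u)) = psi s (harm (phi_word v) (W u))"
  using assms(2,3)
proof (induction "length v + length u" arbitrary: v u rule: less_induct)
  case less
  consider "v = []" | "u = []" | v' a u' b where "v = v' @ [a]" "u = u' @ [b]"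
    by (metis rev_exhaust)
  then show ?case
  proof cases
    case 1
    then show ?thesis by (simp add: diamond_word_Nil harm_Nil_left)
  next
    case 2
    then show ?thesis by (simp add: psi_W diamond_word_def dw_Nil_right phi_def harm_Nil_right)
  next
    case 3
    have v': "set v' \<subseteq> {X, Y 1}" and a: "a \<in> {X, Y 1}"
      using 3 less.prems(1) by auto
    have u': "index_prod u' \<noteq> 0" and b: "index_prod [b] \<noteq> 0"
      using 3 less.prems(2) by (auto simp: index_prod_append)
    interpret diamond_step s v' u'
    proof
      fix b' assume "index_prod [b'] \<noteq> 0"
      then show "diamond_word s v' (psi s (W (u' @ [b']))) = psi s (harm (phi_word v') (W (u' @ [b'])))"
        using less.hyps[of v' "u' @ [b']"] 3 v' u' by (simp add: index_prod_append)
    next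
      fix a' assume "a' \<in> {X, Y 1}"
      then show "diamond_word s (v' @ [a']) (psi s (W u')) = psi s (harm (phi_word (v' @ [a'])) (W u'))"
        using less.hyps[of "v' @ [a']" u'] 3 v' u' by auto
    qed (use assms(1) v' u' in auto)
    show ?thesis
      using 3 a b by (cases b) (auto simp: step_X step_Y)
  qed
qed

lemma diamond_word_psi:
  assumes "s \<noteq> 0" and "set v \<subseteq> {X, Y 1}"
    and "\<And>u. u \<in> Poly_Mapping.keys x \<Longrightarrow> index_prod u \<noteq> 0"
  shows "diamond_word s v (psi s x) = psi s (harm (phi_word v) x)"
proof -
  have "diamond_word s v (psi s x) = lin (\<lambda>u. diamond_word s v (psi s (W u))) x"
    by (simp add: diamond_word_def linear_op_expand[OF linear_op_psi, of s x] lin_lin)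
  also have "\<dots> = lin (\<lambda>u. psi s (harm (phi_word v) (W u))) x"
    by (rule lin_cong) (simp add: diamond_word_psi_W assms)
  also have "\<dots> = psi s (harm (phi_word v) x)"
    by (rule linear_op_expand[OF linear_op_comp[OF linear_op_psi linear_op_harm_right], symmetric])
  finally show ?thesis .
qed

section \<open>\<open>\<psi>\<^sub>s\<close> maps \<open>\<A>\<^sub>r\<close> onto \<open>\<A>\<^sub>r\<close>\<close>

lemma mu_mult: "a \<in> mu r \<Longrightarrow> b \<in> mu r \<Longrightarrow> a * b \<in> mu r"
  by (simp add: mu_def power_mult_distrib)

lemma mu_divide: "a \<in> mu r \<Longrightarrow> b \<in> mu r \<Longrightarrow> a / b \<in> mu r"
  by (simp add: mu_def power_divide)

lemma one_in_mu: "1 \<in> mu r"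
  by (simp add: mu_def)

lemma mu_nonzero: "r \<ge> 1 \<Longrightarrow> a \<in> mu r \<Longrightarrow> a \<noteq> 0"
  unfolding mu_def by (cases r) auto

lemma keys_W [simp]: "Poly_Mapping.keys (W w) = {w}"
  by (simp add: W_def)

lemma W_in_Alg_iff: "W w \<in> Alg r \<longleftrightarrow> (\<forall>t. Y t \<in> set w \<longrightarrow> t \<in> mu r)"
  by (simp add: Alg_def W_def)

lemma W_key_in_Alg: "p \<in> Alg r \<Longrightarrow> w \<in> Poly_Mapping.keys p \<Longrightarrow> W w \<in> Alg r"
  by (simp add: Alg_def W_in_Alg_iff)

lemma index_prod_in_mu: "W u \<in> Alg r \<Longrightarrow> index_prod u \<in> mu r"
  by (induction u rule: index_prod.induct) (auto simp: W_in_Alg_iff one_in_mu mu_mult)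

lemma Alg_add: "p \<in> Alg r \<Longrightarrow> q \<in> Alg r \<Longrightarrow> p + q \<in> Alg r"
  using keys_add[of p q] by (auto simp: Alg_def)

lemma Alg_diff: "p \<in> Alg r \<Longrightarrow> q \<in> Alg r \<Longrightarrow> p - q \<in> Alg r"
  using keys_diff[of p q] by (auto simp: Alg_def)

lemma Alg_uminus: "p \<in> Alg r \<Longrightarrow> - p \<in> Alg r"
  by (simp add: Alg_def)

lemma Alg_lin: "(\<And>w. w \<in> Poly_Mapping.keys p \<Longrightarrow> F w \<in> Alg r) \<Longrightarrow> lin F p \<in> Alg r"
  using keys_lin[of F p] unfolding Alg_def by blast

lemma lin_in_psi_image:
  assumes "\<And>w. w \<in> Poly_Mapping.keys p \<Longrightarrow> F w \<in> psi s ` Alg r"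
  shows "lin F p \<in> psi s ` Alg r"
proof -
  have "\<forall>w\<in>Poly_Mapping.keys p. \<exists>x. x \<in> Alg r \<and> F w = psi s x"
    using assms by blast
  then obtain G where G: "\<forall>w\<in>Poly_Mapping.keys p. G w \<in> Alg r \<and> F w = psi s (G w)"
    by (rule bchoice[THEN exE])
  have "lin F p = lin (\<lambda>w. psi s (G w)) p"
    using G by (blast intro: lin_cong)
  also have "\<dots> = psi s (lin G p)"
    by (rule linear_op_lin_comp[OF linear_op_psi, symmetric])
  finally show ?thesis
    using G Alg_lin[of p G r] by blast
qed

lemma psi_W_mult_letter_in_psi_image:
  assumes r: "r \<ge> 1" and s: "s \<in> mu r" and u: "W u \<in> Alg r" and a: "W [a] \<in> Alg r"
  shows "psi s (W u) * W [a] \<in> psi s ` Alg r"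
proof -
  define l where "l = s * index_prod u"
  have l_mu: "l \<in> mu r"
    unfolding l_def by (rule mu_mult[OF s index_prod_in_mu[OF u]])
  then have l: "l \<in> mu r" "l \<noteq> 0"
    using mu_nonzero[OF r] by auto
  have psi_Y: "psi s (W (u @ [Y c])) = psi s (W u) * phi_letter (Y (l * c))" for c
    using psi_snoc_Y[OF homogeneous_W, of s u c] by (simp add: W_append l_def)
  have Alg_Y: "W (u @ [Y (c / l)]) \<in> Alg r" if "c \<in> mu r" for c
    using u that l mu_divide by (auto simp: W_in_Alg_iff)
  have Y1: "psi s (W u) * W [Y 1] = psi s (- W (u @ [Y (1 / l)]))"
    using psi_Y[of "1 / l"] l by (simp add: phi_letter_Y1 psi_uminus)
  show ?thesis
  proof (cases a)
    case X
    have "psi s (W u) * W [a] = psi s (W (u @ [X]) + W (u @ [Y (1 / l)]))"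
      using X Y1 psi_snoc_X[of s "W u"]
      by (simp add: psi_add psi_uminus W_append phi_letter.simps(1) distrib_left)
    moreover have "W (u @ [X]) + W (u @ [Y (1 / l)]) \<in> Alg r"
      using u Alg_Y[OF one_in_mu] by (auto simp: W_in_Alg_iff intro: Alg_add)
    ultimately show ?thesis by blast
  next
    case (Y t)
    have t: "t \<in> mu r"
      using a Y by (simp add: W_in_Alg_iff)
    have "psi s (W u) * W [a] = psi s (W (u @ [Y (t / l)]) - W (u @ [Y (1 / l)]))" if "t \<noteq> 1"
      using Y Y1 psi_Y[of "t / l"] l that
      by (simp add: psi_diff psi_uminus phi_letter_Y right_diff_distrib)
    moreover have "W (u @ [Y (t / l)]) - W (u @ [Y (1 / l)]) \<in> Alg r"
      using Alg_Y[OF t] Alg_Y[OF one_in_mu] by (rule Alg_diff)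
    moreover have "- W (u @ [Y (1 / l)]) \<in> Alg r"
      using Alg_Y[OF one_in_mu] by (rule Alg_uminus)
    ultimately show ?thesis
      using Y Y1 by (cases "t = 1") auto
  qed
qed

lemma W_in_psi_image:
  assumes "r \<ge> 1" and "s \<in> mu r"
  shows "W w \<in> Alg r \<Longrightarrow> W w \<in> psi s ` Alg r"
proof (induction w rule: rev_induct)
  case Nil
  have "psi s (W []) = W []" and "W [] \<in> Alg r"
    by (simp_all add: psi_W W_in_Alg_iff)
  then show ?case by (metis image_eqI)
next
  case (snoc a w)
  have w: "W w \<in> Alg r" and a: "W [a] \<in> Alg r"
    using snoc.prems by (auto simp: W_in_Alg_iff)
  then obtain x where x: "x \<in> Alg r" "W w = psi s x"
    using snoc.IH by blast
  have "W (w @ [a]) = psi s x * W [a]"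
    by (simp add: x(2) W_append[symmetric])
  also have "\<dots> = lin (\<lambda>u. psi s (W u) * W [a]) x"
    by (rule psi_mult_W)
  also have "\<dots> \<in> psi s ` Alg r"
    by (rule lin_in_psi_image)
      (rule psi_W_mult_letter_in_psi_image[OF assms W_key_in_Alg[OF x(1)] a])
  finally show ?case .
qed

lemma Alg_subset_psi_image:
  assumes "r \<ge> 1" and "s \<in> mu r"
  shows "Alg r \<subseteq> psi s ` Alg r"
proof
  fix w assume "w \<in> Alg r"
  then have "lin W w \<in> psi s ` Alg r"
    by (intro lin_in_psi_image W_in_psi_image[OF assms] W_key_in_Alg)
  then show "w \<in> psi s ` Alg r" by (simp add: lin_W_id)
qed

theorem mainTheorem9:
  fixes r :: nat and s :: complex and v w :: ncpoly
  assumes "r \<ge> 1" and "s \<in> mu r" and "v \<in> Alg1" and "w \<in> Alg r"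
  shows "diamond s v w = psi s (harm (phi v) (inv_into (Alg r) (psi s) w))"
proof -
  define x where "x = inv_into (Alg r) (psi s) w"
  have "w \<in> psi s ` Alg r"
    using Alg_subset_psi_image[OF assms(1,2)] assms(4) by blast
  then have "x \<in> Alg r" and "psi s x = w"
    unfolding x_def by (auto intro: inv_into_into f_inv_into_f)
  then have "diamond_word s u w = psi s (harm (phi_word u) x)" if "u \<in> Poly_Mapping.keys v" for u
    using that assms diamond_word_psi[of s u x] mu_nonzero index_prod_in_mu W_key_in_Alg
    by (auto simp: Alg1_def)
  then have "diamond s v w = lin (\<lambda>u. psi s (harm (phi_word u) x)) v"
    by (simp add: diamond_def diamond_word_def[symmetric] cong: lin_cong)
  also have "\<dots> = psi s (harm (phi v) x)"
    unfolding phi_def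
    by (rule linear_op_lin_comp[OF linear_op_comp[OF linear_op_psi linear_op_harm_left], symmetric])
  finally show ?thesis unfolding x_def .
qed

end
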